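(* Let $\mathcal{C}$ be a class of finite graphs. (a) $\mathcal{C}$ is $\mathrm{MSO}_2$-orderable if, and only if, $\mathrm{IS}(\mathcal{C})$ is $\mathrm{MSO}_1$-orderable. (b) $\mathcal{C}$ has property $\mathsf{SEP}$ if, and only if, $\mathrm{IS}(\mathcal{C})$ has property $\mathsf{CUT}$.
   Context: For a graph $G=\langle V,E\rangle$ its incidence split graph $\mathrm{IS}(G)$ has vertex set $V\cup E$ and edges: $\{v,e\}$ whenever $v\in V$ is an end-vertex of $e\in E$, together with $\{x,y\}$ for all distinct $x,y\in V$; $\mathrm{IS}(\mathcal{C})=\{\mathrm{IS}(G):G\in\mathcal{C}\}$. $\lfloor G\rfloor$ is the structure (universe $V$, edge relation) and $\lceil G\rceil$ the structure (universe $V\cup E$, incidence relation $\subseteq V\times E$). An MSO-formula $\varphi(x,y;Z_0,\dots,Z_{n-1})$ defines an order on a class of structures if for every nonempty member $\mathfrak{A}$ there are $P_i\subseteq A$ with $\{(a,b):\mathfrak{A}\models\varphi(a,b;\bar P)\}$ a linear order on $A$; a graph class is $\mathrm{MSO}_1$-orderable (resp. $\mathrm{MSO}_2$-orderable) if some formula defines an order on $\{\lfloor G\rfloor\}$ (resp. $\{\lceil G\rceil\}$). $\mathrm{Sep}(G,k)$ is the maximum over vertex sets $S$, $|S|\le k$, of the number of connected components of $G-S$; $\mathsf{SEP}$ means there is $f$ with $\mathrm{Sep}(G,k)\le f(k)$ for all members and all $k$. A graph with ports in $[k]$ is a graph with $\pi:V\to[k]$; for $R\subseteq[k]\times[k]$,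 $G\otimes_R H$ is the disjoint union plus all edges $\{x,y\}$ with $x,y$ in different operands, labels $a,b$ with $(a,b)\in R$; $\mathrm{Del}$ deletes labels; $\mathrm{Cut}(G,k)$ is the maximal $m$ with $G\cong\mathrm{Del}(H_0\otimes_R\cdots\otimes_R H_{m-1})$ for nonempty $H_i$ with ports in $[k]$ and some $R$; $\mathsf{CUT}$ means there is $f$ with $\mathrm{Cut}(G,k)\le f(k)$ for all members and all $k$. *)

theory Defs
  imports Main
begin

type_synonym 'v graph = "'v set \<times> 'v set set"

definition verts :: "'v graph \<Rightarrow> 'v set" where "verts G = fst G"
definition edges :: "'v graph \<Rightarrow> 'v set set" where "edges G = snd G"

definition finite_graph :: "'v graph \<Rightarrow> bool" where
  "finite_graph G \<longleftrightarrow> finite (verts G) \<and>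
     (\<forall>e\<in>edges G. e \<subseteq> verts G \<and> card e = 2)"

definition graph_iso :: "'v graph \<Rightarrow> 'w graph \<Rightarrow> bool" where
  "graph_iso G H \<longleftrightarrow> (\<exists>f. bij_betw f (verts G) (verts H) \<and>
     (\<forall>x\<in>verts G. \<forall>y\<in>verts G. {x, y} \<in> edges G \<longleftrightarrow> {f x, f y} \<in> edges H))"

definition IS :: "'v graph \<Rightarrow> ('v + 'v set) graph" where
  "IS G = (Inl ` verts G \<union> Inr ` edges G,
           {{Inl v, Inr e} | v e. e \<in> edges G \<and> v \<in> e} \<union>
           {{Inl x, Inl y} | x y. x \<in> verts G \<and> y \<in> verts G \<and> x \<noteq> y})"

text \<open>First-order variables and set variables are both indexed by naturals
(separate name spaces).\<close>

datatype mso =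
    Eq nat nat
  | Rel nat nat
  | Mem nat nat
  | Neg mso
  | Conj mso mso
  | Ex1 nat mso
  | ExS nat mso

type_synonym 'a rstruct = "'a set \<times> ('a \<Rightarrow> 'a \<Rightarrow> bool)"

fun sat :: "'a rstruct \<Rightarrow> (nat \<Rightarrow> 'a) \<Rightarrow> (nat \<Rightarrow> 'a set) \<Rightarrow> mso \<Rightarrow> bool" where
  "sat S v W (Eq i j) = (v i = v j)"
| "sat S v W (Rel i j) = snd S (v i) (v j)"
| "sat S v W (Mem i j) = (v i \<in> W j)"
| "sat S v W (Neg \<phi>) = (\<not> sat S v W \<phi>)"
| "sat S v W (Conj \<phi> \<psi>) = (sat S v W \<phi> \<and> sat S v W \<psi>)"
| "sat S v W (Ex1 i \<phi>) = (\<exists>a\<in>fst S. sat S (v(i := a)) W \<phi>)"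
| "sat S v W (ExS i \<phi>) = (\<exists>X. X \<subseteq> fst S \<and> sat S v (W(i := X)) \<phi>)"

fun fv1 :: "mso \<Rightarrow> nat set" where
  "fv1 (Eq i j) = {i, j}"
| "fv1 (Rel i j) = {i, j}"
| "fv1 (Mem i j) = {i}"
| "fv1 (Neg \<phi>) = fv1 \<phi>"
| "fv1 (Conj \<phi> \<psi>) = fv1 \<phi> \<union> fv1 \<psi>"
| "fv1 (Ex1 i \<phi>) = fv1 \<phi> - {i}"
| "fv1 (ExS i \<phi>) = fv1 \<phi>"

fun fv2 :: "mso \<Rightarrow> nat set" where
  "fv2 (Eq i j) = {}"
| "fv2 (Rel i j) = {}"
| "fv2 (Mem i j) = {j}"
| "fv2 (Neg \<phi>) = fv2 \<phi>"
| "fv2 (Conj \<phi> \<psi>) = fv2 \<phi> \<union> fv2 \<psi>"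
| "fv2 (Ex1 i \<phi>) = fv2 \<phi>"
| "fv2 (ExS i \<phi>) = fv2 \<phi> - {i}"

text \<open>phi(x, y; Z_0, ..., Z_(n-1)): first-order variable 0 is x, 1 is y, and the
free set variables are among 0..n-1.  Relation defined in structure S with
parameters P.\<close>

definition defined_rel :: "mso \<Rightarrow> 'a rstruct \<Rightarrow> (nat \<Rightarrow> 'a set) \<Rightarrow> ('a \<times> 'a) set" where
  "defined_rel \<phi> S P = {(a, b). a \<in> fst S \<and> b \<in> fst S \<and>
       sat S (\<lambda>i. if i = 0 then a else b) P \<phi>}"

definition defines_order :: "mso \<Rightarrow> nat \<Rightarrow> 'a rstruct set \<Rightarrow> bool" where
  "defines_order \<phi> n K \<longleftrightarrow> fv1 \<phi> \<subseteq> {0, 1} \<and> fv2 \<phi> \<subseteq> {..<n} \<and>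
     (\<forall>S\<in>K. fst S \<noteq> {} \<longrightarrow>
        (\<exists>P. (\<forall>i<n. P i \<subseteq> fst S) \<and> linear_order_on (fst S) (defined_rel \<phi> S P)))"

definition lower :: "'v graph \<Rightarrow> 'v rstruct" where
  "lower G = (verts G, \<lambda>x y. {x, y} \<in> edges G)"

definition upper :: "'v graph \<Rightarrow> ('v + 'v set) rstruct" where
  "upper G = (Inl ` verts G \<union> Inr ` edges G,
              \<lambda>x y. \<exists>v e. x = Inl v \<and> y = Inr e \<and> e \<in> edges G \<and> v \<in> e)"

definition MSO1_orderable :: "'v graph set \<Rightarrow> bool" where
  "MSO1_orderable C \<longleftrightarrow> (\<exists>\<phi> n. defines_order \<phi> n (lower ` C))"

definition MSO2_orderable :: "'v graph set \<Rightarrow> bool" where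
  "MSO2_orderable C \<longleftrightarrow> (\<exists>\<phi> n. defines_order \<phi> n (upper ` C))"

definition del_verts :: "'v graph \<Rightarrow> 'v set \<Rightarrow> 'v graph" where
  "del_verts G S = (verts G - S, {e \<in> edges G. e \<inter> S = {}})"

definition adj :: "'v graph \<Rightarrow> 'v \<Rightarrow> 'v \<Rightarrow> bool" where
  "adj G x y \<longleftrightarrow> {x, y} \<in> edges G"

definition components :: "'v graph \<Rightarrow> 'v set set" where
  "components G = {{y \<in> verts G. (adj G)\<^sup>*\<^sup>* x y} | x. x \<in> verts G}"

definition num_components :: "'v graph \<Rightarrow> nat" where
  "num_components G = card (components G)"

definition Sep :: "'v graph \<Rightarrow> nat \<Rightarrow> nat" where
  "Sep G k = Max {num_components (del_verts G S) | S. S \<subseteq> verts G \<and> card S \<le> k}"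

definition SEP :: "'v graph set \<Rightarrow> bool" where
  "SEP C \<longleftrightarrow> (\<exists>f :: nat \<Rightarrow> nat. \<forall>G\<in>C. \<forall>k. Sep G k \<le> f k)"

text \<open>Cut(G,k) is the maximal such m; Sup on nat (= Max for the finite nonempty
case, 0 if no decomposition exists, e.g. k = 0 and G nonempty).\<close>

text \<open>A graph with ports in [k] = {1..k}: a graph together with a labelling.\<close>
type_synonym 'w pgraph = "'w graph \<times> ('w \<Rightarrow> nat)"

definition has_ports :: "nat \<Rightarrow> 'w pgraph \<Rightarrow> bool" where
  "has_ports k H \<longleftrightarrow> finite_graph (fst H) \<and> snd H ` verts (fst H) \<subseteq> {1..k}"

text \<open>H_0 (x)_R ... (x)_R H_(m-1): disjoint union (vertices tagged by the operand
index) plus all edges between vertices of different operands whose labels (a, b)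
satisfy (a, b) \<in> R.\<close>
definition join :: "(nat \<times> nat) set \<Rightarrow> (nat \<Rightarrow> 'w pgraph) \<Rightarrow> nat \<Rightarrow> (nat \<times> 'w) pgraph" where
  "join R H m =
     (({(i, x). i < m \<and> x \<in> verts (fst (H i))},
       {{(i, x), (i, y)} | i x y. i < m \<and> {x, y} \<in> edges (fst (H i))} \<union>
       {{(i, x), (j, y)} | i j x y. i < m \<and> j < m \<and> i \<noteq> j \<and>
           x \<in> verts (fst (H i)) \<and> y \<in> verts (fst (H j)) \<and>
           (snd (H i) x, snd (H j) y) \<in> R}),
      \<lambda>(i, x). snd (H i) x)"

definition Del :: "'w pgraph \<Rightarrow> 'w graph" where
  "Del H = fst H"

definition Cut :: "'v graph \<Rightarrow> nat \<Rightarrow> nat" where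
  "Cut G k = Sup {m. \<exists>(R :: (nat \<times> nat) set) (H :: nat \<Rightarrow> 'v pgraph).
       R \<subseteq> {1..k} \<times> {1..k} \<and>
       (\<forall>i<m. has_ports k (H i) \<and> verts (fst (H i)) \<noteq> {}) \<and>
       graph_iso G (Del (join R H m))}"

definition CUT :: "'v graph set \<Rightarrow> bool" where
  "CUT C \<longleftrightarrow> (\<exists>f :: nat \<Rightarrow> nat. \<forall>G\<in>C. \<forall>k. Cut G k \<le> f k)"

end

theory Submission
  imports Defs
begin

text \<open>(a) The incidence structure of \<open>G\<close> and the graph \<open>IS G\<close> have the same universe, and
  each relation is MSO-definable from the other once the set of vertex nodes is given as a
  parameter: an incidence is an \<open>IS\<close>-edge from a vertex node to a non-vertex node, and an
  \<open>IS\<close>-edge is an incidence in either direction or a pair of distinct vertex nodes.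
  Substituting these formulas for the relation symbol transports order definitions both ways.

  (b) A decomposition of \<open>IS G\<close> into \<open>m\<close> operands with \<open>k\<close> ports is a partition of the nodes
  with port labels. At most \<open>k\<close> parts contain no vertex node, because such a part is determined
  by the port of one of its edge nodes. Keeping, for every port, two edges of that port lying
  in different parts gives a set \<open>S\<close> of at most \<open>4k\<close> vertices that contains every vertex lying
  in another part than an incident edge node. Every other part contains a vertex node, of \<open>S\<close>
  or of \<open>G - S\<close>, and adjacent vertices outside \<open>S\<close> lie in the same part, so
  \<open>m \<le> 5k + Sep(G, 4k)\<close>. Conversely, for \<open>|S| \<le> k\<close> the components of \<open>G - S\<close>, each with
  its incident edge nodes, are the operands of a decomposition of \<open>IS G\<close> with \<open>2k + 2\<close> ports
  that record which vertex of \<open>S\<close> an edge node is attached to.\<close>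

lemma edge_subset_verts: "finite_graph G \<Longrightarrow> e \<in> edges G \<Longrightarrow> e \<subseteq> verts G"
  by (simp add: finite_graph_def)

lemma finite_edges: "finite_graph G \<Longrightarrow> finite (edges G)"
  by (meson Pow_iff finite_Pow_iff finite_graph_def finite_subset subsetI)

lemma card_edge: "finite_graph G \<Longrightarrow> e \<in> edges G \<Longrightarrow> card e = 2"
  by (simp add: finite_graph_def)

lemma verts_IS: "verts (IS G) = Inl ` verts G \<union> Inr ` edges G"
  by (simp add: IS_def verts_def)

lemma IS_edges:
  "edges (IS G) = {{Inl v, Inr e} | v e. e \<in> edges G \<and> v \<in> e} \<union>
     {{Inl x, Inl y} | x y. x \<in> verts G \<and> y \<in> verts G \<and> x \<noteq> y}"
  by (simp add: IS_def edges_def)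

lemma Inl_Inl_in_edges_IS:
  "{Inl a, Inl b} \<in> edges (IS G) \<longleftrightarrow> a \<in> verts G \<and> b \<in> verts G \<and> a \<noteq> b"
  unfolding IS_edges by (auto simp: doubleton_eq_iff)

lemma Inl_Inr_in_edges_IS: "{Inl a, Inr e} \<in> edges (IS G) \<longleftrightarrow> e \<in> edges G \<and> a \<in> e"
  unfolding IS_edges by (auto simp: doubleton_eq_iff)

lemma Inr_Inl_in_edges_IS: "{Inr e, Inl a} \<in> edges (IS G) \<longleftrightarrow> e \<in> edges G \<and> a \<in> e"
  by (metis Inl_Inr_in_edges_IS insert_commute)

lemma Inr_Inr_notin_edges_IS: "{Inr e, Inr e'} \<notin> edges (IS G)"
  unfolding IS_edges by (auto simp: doubleton_eq_iff)

lemmas in_edges_IS_simps =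
  Inl_Inl_in_edges_IS Inl_Inr_in_edges_IS Inr_Inl_in_edges_IS Inr_Inr_notin_edges_IS

lemma finite_graph_IS: "finite_graph G \<Longrightarrow> finite_graph (IS G)"
  using finite_edges[of G] unfolding finite_graph_def verts_IS IS_edges
  by (auto simp: card_insert_if)

section \<open>Interpretations of one relation in another\<close>

fun subst_rel :: "(nat \<Rightarrow> nat \<Rightarrow> mso) \<Rightarrow> mso \<Rightarrow> mso" where
  "subst_rel f (Eq i j) = Eq i j"
| "subst_rel f (Rel i j) = f i j"
| "subst_rel f (Mem i j) = Mem i j"
| "subst_rel f (Neg \<phi>) = Neg (subst_rel f \<phi>)"
| "subst_rel f (Conj \<phi> \<psi>) = Conj (subst_rel f \<phi>) (subst_rel f \<psi>)"
| "subst_rel f (Ex1 i \<phi>) = Ex1 i (subst_rel f \<phi>)"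
| "subst_rel f (ExS i \<phi>) = ExS i (subst_rel f \<phi>)"

fun set_var_bound :: "mso \<Rightarrow> nat" where
  "set_var_bound (Eq i j) = 0"
| "set_var_bound (Rel i j) = 0"
| "set_var_bound (Mem i j) = Suc j"
| "set_var_bound (Neg \<phi>) = set_var_bound \<phi>"
| "set_var_bound (Conj \<phi> \<psi>) = max (set_var_bound \<phi>) (set_var_bound \<psi>)"
| "set_var_bound (Ex1 i \<phi>) = set_var_bound \<phi>"
| "set_var_bound (ExS i \<phi>) = max (Suc i) (set_var_bound \<phi>)"

lemma sat_cong_fv2: "\<forall>i\<in>fv2 \<phi>. W i = W' i \<Longrightarrow> sat S v W \<phi> = sat S v W' \<phi>"
proof (induction \<phi> arbitrary: v W W')
  case (ExS i \<phi>)
  have "sat S v (W(i := X)) \<phi> = sat S v (W'(i := X)) \<phi>" for X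
    using ExS.prems by (intro ExS.IH) auto
  then show ?case by simp
next
  case (Conj \<phi> \<psi>)
  then show ?case by (metis UnI1 UnI2 fv2.simps(5) sat.simps(5))
qed auto

lemma fv1_subst_rel: "(\<And>i j. fv1 (f i j) \<subseteq> {i, j}) \<Longrightarrow> fv1 (subst_rel f \<phi>) \<subseteq> fv1 \<phi>"
  by (induction \<phi>) auto

lemma fv2_subst_rel: "(\<And>i j. fv2 (f i j) \<subseteq> {N}) \<Longrightarrow> fv2 (subst_rel f \<phi>) \<subseteq> fv2 \<phi> \<union> {N}"
  by (induction \<phi>) auto

text \<open>The set variable \<open>N\<close> is not rebound inside \<open>\<phi>\<close>, so it keeps the value \<open>V\<close>
  that the relation-defining formulas \<open>f i j\<close> rely on.\<close>

lemma sat_subst_rel: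
  assumes "fst S' = fst S"
    and "\<And>i j v W. W N = V \<Longrightarrow> sat S' v W (f i j) = snd S (v i) (v j)"
    and "set_var_bound \<phi> \<le> N" and "W N = V"
  shows "sat S' v W (subst_rel f \<phi>) = sat S v W \<phi>"
  using assms(3,4)
proof (induction \<phi> arbitrary: v W)
  case (ExS i \<phi>)
  then show ?case using assms(1) by auto
qed (auto simp: assms(1,2))

definition order_definable :: "'a rstruct set \<Rightarrow> bool" where
  "order_definable K \<longleftrightarrow> (\<exists>\<phi> n. defines_order \<phi> n K)"

lemma order_definable_interpretation:
  fixes K K' :: "'a rstruct set" and f :: "nat \<Rightarrow> nat \<Rightarrow> nat \<Rightarrow> mso"
  assumes "order_definable K"
    and fv1_f: "\<And>N i j. fv1 (f N i j) \<subseteq> {i, j}" and fv2_f: "\<And>N i j. fv2 (f N i j) \<subseteq> {N}"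
    and interp: "\<And>S'. S' \<in> K' \<Longrightarrow> \<exists>S\<in>K. fst S = fst S' \<and> (\<exists>V\<subseteq>fst S'.
               \<forall>N i j v W. W N = V \<longrightarrow> sat S' v W (f N i j) = snd S (v i) (v j))"
  shows "order_definable K'"
proof -
  obtain \<phi> n where fv1_\<phi>: "fv1 \<phi> \<subseteq> {0, 1}" and fv2_\<phi>: "fv2 \<phi> \<subseteq> {..<n}"
    and order: "\<And>S. S \<in> K \<Longrightarrow> fst S \<noteq> {} \<Longrightarrow>
                  \<exists>P. (\<forall>i<n. P i \<subseteq> fst S) \<and> linear_order_on (fst S) (defined_rel \<phi> S P)"
    using assms(1) unfolding order_definable_def defines_order_def by blast
  \<comment> \<open>a set-variable index not occurring in \<open>\<phi>\<close>, for the parameter \<open>V\<close>\<close>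
  define N where "N = max n (set_var_bound \<phi>)"
  have "defines_order (subst_rel (f N) \<phi>) (Suc N) K'"
    unfolding defines_order_def
  proof (intro conjI ballI impI)
    show "fv1 (subst_rel (f N) \<phi>) \<subseteq> {0, 1}"
      using fv1_subst_rel[of "f N" \<phi>] fv1_f fv1_\<phi> by blast
    show "fv2 (subst_rel (f N) \<phi>) \<subseteq> {..<Suc N}"
      using fv2_subst_rel[of "f N" N \<phi>] fv2_f fv2_\<phi> unfolding N_def by fastforce
    fix S' assume "S' \<in> K'" and ne: "fst S' \<noteq> {}"
    then obtain S V where S: "S \<in> K" "fst S = fst S'" and V: "V \<subseteq> fst S'"
      and f: "\<And>i j v W. W N = V \<Longrightarrow> sat S' v W (f N i j) = snd S (v i) (v j)"
      using interp by metis
    obtain P where P: "\<forall>i<n. P i \<subseteq> fst S" and lin: "linear_order_on (fst S) (defined_rel \<phi> S P)"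
      using order[OF S(1)] ne S(2) by metis
    define P' where "P' = (\<lambda>i. if i < n then P i else {})(N := V)"
    have "sat S' w P' (subst_rel (f N) \<phi>) = sat S w P \<phi>" for w
    proof -
      have "sat S' w P' (subst_rel (f N) \<phi>) = sat S w P' \<phi>"
        by (rule sat_subst_rel[where N = N and V = V, OF S(2)[symmetric] f])
          (simp_all add: N_def P'_def)
      also have "\<dots> = sat S w P \<phi>"
        using fv2_\<phi> by (intro sat_cong_fv2) (auto simp: P'_def N_def)
      finally show ?thesis .
    qed
    then have "defined_rel (subst_rel (f N) \<phi>) S' P' = defined_rel \<phi> S P"
      using S(2) by (simp add: defined_rel_def)
    moreover have "\<forall>i<Suc N. P' i \<subseteq> fst S'"
      using P V S(2) by (simp add: P'_def)
    ultimately show "\<exists>P. (\<forall>i<Suc N. P i \<subseteq> fst S') \<and>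
        linear_order_on (fst S') (defined_rel (subst_rel (f N) \<phi>) S' P)"
      using lin S(2) by metis
  qed
  then show ?thesis unfolding order_definable_def by blast
qed

abbreviation Disj :: "mso \<Rightarrow> mso \<Rightarrow> mso" where
  "Disj \<phi> \<psi> \<equiv> Neg (Conj (Neg \<phi>) (Neg \<psi>))"

definition incidence_fm :: "nat \<Rightarrow> nat \<Rightarrow> nat \<Rightarrow> mso" where
  "incidence_fm N i j = Conj (Rel i j) (Conj (Mem i N) (Neg (Mem j N)))"

definition split_edge_fm :: "nat \<Rightarrow> nat \<Rightarrow> nat \<Rightarrow> mso" where
  "split_edge_fm N i j =
     Disj (Rel i j) (Disj (Rel j i) (Conj (Neg (Eq i j)) (Conj (Mem i N) (Mem j N))))"

lemma fst_lower_IS: "fst (lower (IS G)) = fst (upper G)"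
  by (simp add: lower_def upper_def IS_def verts_def)

lemma sat_incidence_fm:
  assumes "finite_graph G" and "W N = Inl ` verts G"
  shows "sat (lower (IS G)) v W (incidence_fm N i j) = snd (upper G) (v i) (v j)"
proof (cases "v i"; cases "v j")
  fix a e assume "v i = Inl a" "v j = Inr e"
  then show ?thesis using assms edge_subset_verts[OF assms(1), of e]
    by (auto simp: incidence_fm_def lower_def upper_def Inl_Inr_in_edges_IS)
qed (use assms in \<open>auto simp: incidence_fm_def lower_def upper_def in_edges_IS_simps\<close>)

lemma sat_split_edge_fm:
  assumes "W N = Inl ` verts G"
  shows "sat (upper G) v W (split_edge_fm N i j) = snd (lower (IS G)) (v i) (v j)"
  using assms by (cases "v i"; cases "v j")
    (auto simp: split_edge_fm_def lower_def upper_def in_edges_IS_simps)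

lemma vertex_nodes_subset: "Inl ` verts G \<subseteq> fst (upper G)"
  by (auto simp: upper_def)

theorem MSO2_orderable_iff_MSO1_orderable_IS:
  assumes "\<forall>G\<in>C. finite_graph G"
  shows "MSO2_orderable C \<longleftrightarrow> MSO1_orderable (IS ` C)"
proof
  assume MSO2: "MSO2_orderable C"
  have "order_definable (lower ` IS ` C)"
  proof (rule order_definable_interpretation[where f = incidence_fm])
    fix S' assume "S' \<in> lower ` IS ` C"
    then obtain G where "G \<in> C" "S' = lower (IS G)" by blast
    then show "\<exists>S\<in>upper ` C. fst S = fst S' \<and> (\<exists>V\<subseteq>fst S'.
        \<forall>N i j v W. W N = V \<longrightarrow> sat S' v W (incidence_fm N i j) = snd S (v i) (v j))"
      using assms vertex_nodes_subset[of G] sat_incidence_fm[of G]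
      by (intro bexI[of _ "upper G"] conjI exI[of _ "Inl ` verts G"]) (auto simp: fst_lower_IS)
  qed (use MSO2 in \<open>auto simp: MSO2_orderable_def order_definable_def incidence_fm_def\<close>)
  then show "MSO1_orderable (IS ` C)"
    unfolding MSO1_orderable_def order_definable_def by (simp add: image_image)
next
  assume MSO1: "MSO1_orderable (IS ` C)"
  have "order_definable (upper ` C)"
  proof (rule order_definable_interpretation[where f = split_edge_fm])
    fix S' assume "S' \<in> upper ` C"
    then obtain G where "G \<in> C" "S' = upper G" by blast
    then show "\<exists>S\<in>lower ` IS ` C. fst S = fst S' \<and> (\<exists>V\<subseteq>fst S'.
        \<forall>N i j v W. W N = V \<longrightarrow> sat S' v W (split_edge_fm N i j) = snd S (v i) (v j))"
      using vertex_nodes_subset[of G] sat_split_edge_fm[of _ _ G]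
      by (intro bexI[of _ "lower (IS G)"] conjI exI[of _ "Inl ` verts G"]) (auto simp: fst_lower_IS)
  qed (use MSO1 in \<open>auto simp: MSO1_orderable_def order_definable_def split_edge_fm_def image_image\<close>)
  then show "MSO2_orderable C"
    unfolding MSO2_orderable_def order_definable_def .
qed

definition component_of :: "'v graph \<Rightarrow> 'v \<Rightarrow> 'v set" where
  "component_of G x = {y \<in> verts G. (adj G)\<^sup>*\<^sup>* x y}"

lemma components_eq_image: "components G = component_of G ` verts G"
  unfolding components_def component_of_def by auto

lemma finite_components: "finite (verts G) \<Longrightarrow> finite (components G)"
  by (simp add: components_eq_image)

lemma component_of_eq_if_adj:
  assumes "adj G x y" shows "component_of G x = component_of G y"
proof -
  have "adj G y x" using assms by (simp add: adj_def insert_commute)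
  then show ?thesis
    using assms unfolding component_of_def
    by (auto intro: converse_rtranclp_into_rtranclp)
qed

lemma card_image_le_num_components:
  assumes "finite (verts G)" and "\<And>x y. adj G x y \<Longrightarrow> f x = f y"
  shows "card (f ` verts G) \<le> num_components G"
proof -
  have "f ` verts G \<subseteq> (\<lambda>X. f (SOME x. x \<in> X)) ` components G"
  proof
    fix y assume "y \<in> f ` verts G"
    then obtain x where x: "x \<in> verts G" "y = f x" by blast
    then have x_in: "x \<in> component_of G x" by (simp add: component_of_def)
    have f_const: "(adj G)\<^sup>*\<^sup>* x x' \<Longrightarrow> f x = f x'" for x'
      by (induction rule: rtranclp_induct) (auto dest: assms(2))
    have "(SOME x'. x' \<in> component_of G x) \<in> component_of G x"
      using x_in by (rule someI)
    then have "f (SOME x'. x' \<in> component_of G x) = y"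
      using f_const x(2) unfolding component_of_def by (metis (mono_tags) mem_Collect_eq)
    then show "y \<in> (\<lambda>X. f (SOME x. x \<in> X)) ` components G"
      using x(1) by (auto simp: components_eq_image)
  qed
  then have "card (f ` verts G) \<le> card ((\<lambda>X. f (SOME x. x \<in> X)) ` components G)"
    using assms(1) by (intro card_mono) (simp_all add: finite_components)
  also have "\<dots> \<le> num_components G"
    unfolding num_components_def using assms(1) by (intro card_image_le finite_components)
  finally show ?thesis .
qed

lemma finite_Sep_candidates:
  "finite_graph G \<Longrightarrow>
     finite {num_components (del_verts G S) | S. S \<subseteq> verts G \<and> card S \<le> k}"
  by (rule finite_subset[where B = "(\<lambda>S. num_components (del_verts G S)) ` Pow (verts G)"])
    (auto simp: finite_graph_def)

lemma num_components_le_Sep: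
  "finite_graph G \<Longrightarrow> S \<subseteq> verts G \<Longrightarrow> card S \<le> k \<Longrightarrow>
     num_components (del_verts G S) \<le> Sep G k"
  unfolding Sep_def by (rule Max_ge[OF finite_Sep_candidates]) auto

lemma Sep_attained:
  assumes "finite_graph G"
  obtains S where "S \<subseteq> verts G" "card S \<le> k" "Sep G k = num_components (del_verts G S)"
proof -
  have "Sep G k \<in> {num_components (del_verts G S) | S. S \<subseteq> verts G \<and> card S \<le> k}"
    unfolding Sep_def by (rule Max_in[OF finite_Sep_candidates[OF assms]]) force
  then show ?thesis using that by blast
qed

section \<open>Cut decompositions\<close>

text \<open>An intrinsic description of \<open>\<Gamma> \<cong> Del (H\<^sub>0 \<otimes>\<^sub>R \<dots> \<otimes>\<^sub>R H\<^sub>m\<^sub>-\<^sub>1)\<close>: \<open>p\<close> sends each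
  vertex to its operand and \<open>lab\<close> gives its port.\<close>

definition cut_partition ::
  "'w graph \<Rightarrow> nat \<Rightarrow> (nat \<times> nat) set \<Rightarrow> nat \<Rightarrow> ('w \<Rightarrow> nat) \<Rightarrow> ('w \<Rightarrow> nat) \<Rightarrow> bool" where
  "cut_partition \<Gamma> k R m p lab \<longleftrightarrow> R \<subseteq> {1..k} \<times> {1..k} \<and>
     p ` verts \<Gamma> = {..<m} \<and> lab ` verts \<Gamma> \<subseteq> {1..k} \<and>
     (\<forall>z\<in>verts \<Gamma>. \<forall>w\<in>verts \<Gamma>. p z \<noteq> p w \<longrightarrow>
        ({z, w} \<in> edges \<Gamma> \<longleftrightarrow> (lab z, lab w) \<in> R \<or> (lab w, lab z) \<in> R))"

lemma verts_join: "verts (fst (join R H m)) = {(i, x). i < m \<and> x \<in> verts (fst (H i))}"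
  by (simp add: join_def verts_def)

lemma edge_join_iff:
  assumes "i < m" "j < m" "x \<in> verts (fst (H i))" "y \<in> verts (fst (H j))"
  shows "{(i, x), (j, y)} \<in> edges (fst (join R H m)) \<longleftrightarrow>
    (if i = j then {x, y} \<in> edges (fst (H i))
     else (snd (H i) x, snd (H j) y) \<in> R \<or> (snd (H j) y, snd (H i) x) \<in> R)"
proof -
  have inner: "{(i, x), (j, y)} \<in> {{(i, x), (i, y)} | i x y. i < m \<and> {x, y} \<in> edges (fst (H i))}
      \<longleftrightarrow> i = j \<and> {x, y} \<in> edges (fst (H i))"
    using assms by (auto simp: doubleton_eq_iff insert_commute)
  have cross: "{(i, x), (j, y)} \<in> {{(i, x), (j, y)} | i j x y. i < m \<and> j < m \<and> i \<noteq> j \<and>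
           x \<in> verts (fst (H i)) \<and> y \<in> verts (fst (H j)) \<and> (snd (H i) x, snd (H j) y) \<in> R}
      \<longleftrightarrow> i \<noteq> j \<and> ((snd (H i) x, snd (H j) y) \<in> R \<or> (snd (H j) y, snd (H i) x) \<in> R)"
    using assms by (auto simp: doubleton_eq_iff)
  have "edges (fst (join R H m)) =
      {{(i, x), (i, y)} | i x y. i < m \<and> {x, y} \<in> edges (fst (H i))} \<union>
      {{(i, x), (j, y)} | i j x y. i < m \<and> j < m \<and> i \<noteq> j \<and>
         x \<in> verts (fst (H i)) \<and> y \<in> verts (fst (H j)) \<and> (snd (H i) x, snd (H j) y) \<in> R}"
    by (simp add: join_def edges_def)
  then show ?thesis using inner cross by auto
qed

lemma cut_partition_if_iso_join:
  assumes R: "R \<subseteq> {1..k} \<times> {1..k}"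
    and H: "\<forall>i<m. has_ports k (H i) \<and> verts (fst (H i)) \<noteq> {}"
    and iso: "graph_iso \<Gamma> (Del (join R H m))"
  shows "\<exists>p lab. cut_partition \<Gamma> k R m p lab"
proof -
  obtain f where f: "bij_betw f (verts \<Gamma>) (verts (fst (join R H m)))"
    and f_edges: "\<forall>x\<in>verts \<Gamma>. \<forall>y\<in>verts \<Gamma>.
                    {x, y} \<in> edges \<Gamma> \<longleftrightarrow> {f x, f y} \<in> edges (fst (join R H m))"
    using iso unfolding graph_iso_def Del_def by blast
  define p where "p z = fst (f z)" for z
  define lab where "lab z = snd (H (p z)) (snd (f z))" for z
  have f_split: "f z = (p z, snd (f z))" for z by (simp add: p_def)
  have f_into: "p z < m \<and> snd (f z) \<in> verts (fst (H (p z)))" if "z \<in> verts \<Gamma>" for z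
    using bij_betwE[OF f] that unfolding verts_join p_def by auto
  have "p ` verts \<Gamma> = fst ` verts (fst (join R H m))"
    unfolding p_def bij_betw_imp_surj_on[OF f, symmetric] by (simp add: image_image)
  also have "\<dots> = {..<m}"
    using H unfolding verts_join by force
  finally have p_onto: "p ` verts \<Gamma> = {..<m}" .
  have "lab ` verts \<Gamma> \<subseteq> {1..k}"
    using f_into H unfolding has_ports_def lab_def by blast
  moreover have "{z, w} \<in> edges \<Gamma> \<longleftrightarrow> (lab z, lab w) \<in> R \<or> (lab w, lab z) \<in> R"
    if "z \<in> verts \<Gamma>" "w \<in> verts \<Gamma>" "p z \<noteq> p w" for z w
    using f_edges that f_split[of z] f_split[of w] f_into[OF that(1)] f_into[OF that(2)]
      edge_join_iff[of "p z" m "p w" "snd (f z)" H "snd (f w)" R]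
    by (simp add: lab_def)
  ultimately have "cut_partition \<Gamma> k R m p lab"
    unfolding cut_partition_def using R p_onto by blast
  then show ?thesis by blast
qed

lemma iso_join_if_cut_partition:
  fixes \<Gamma> :: "'w graph"
  assumes fin: "finite_graph \<Gamma>" and part: "cut_partition \<Gamma> k R m p lab"
  shows "\<exists>H :: nat \<Rightarrow> 'w pgraph. (\<forall>i<m. has_ports k (H i) \<and> verts (fst (H i)) \<noteq> {}) \<and>
           graph_iso \<Gamma> (Del (join R H m))"
proof -
  define block where "block i = {z \<in> verts \<Gamma>. p z = i}" for i
  define H :: "nat \<Rightarrow> 'w pgraph"
    where "H i = ((block i, {e \<in> edges \<Gamma>. e \<subseteq> block i}), lab)" for i
  have H_simps: "verts (fst (H i)) = block i" "edges (fst (H i)) = {e \<in> edges \<Gamma>. e \<subseteq> block i}"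
    "snd (H i) = lab" for i
    by (simp_all add: H_def verts_def edges_def)
  have "\<forall>i<m. has_ports k (H i) \<and> verts (fst (H i)) \<noteq> {}"
    using part fin unfolding has_ports_def finite_graph_def cut_partition_def H_simps block_def
    by (auto simp: image_subset_iff) (metis (mono_tags, lifting) imageE lessThan_iff)
  moreover have "bij_betw (\<lambda>z. (p z, z)) (verts \<Gamma>) (verts (fst (join R H m)))"
    using part unfolding verts_join H_simps block_def bij_betw_def inj_on_def cut_partition_def
    by auto
  moreover have "{x, y} \<in> edges \<Gamma> \<longleftrightarrow> {(p x, x), (p y, y)} \<in> edges (fst (join R H m))"
    if "x \<in> verts \<Gamma>" "y \<in> verts \<Gamma>" for x y
  proof -
    have "p x < m" "p y < m" using part that unfolding cut_partition_def by auto
    then show ?thesis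
      using part that edge_join_iff[of "p x" m "p y" x H y R] edge_subset_verts[OF fin]
      unfolding cut_partition_def H_simps block_def by auto
  qed
  ultimately show ?thesis unfolding graph_iso_def Del_def by blast
qed

lemma cut_partition_le_card:
  assumes "finite_graph \<Gamma>" "cut_partition \<Gamma> k R m p lab"
  shows "m \<le> card (verts \<Gamma>)"
proof -
  have "m = card (p ` verts \<Gamma>)" using assms(2) by (simp add: cut_partition_def)
  also have "\<dots> \<le> card (verts \<Gamma>)"
    using assms(1) by (intro card_image_le) (simp add: finite_graph_def)
  finally show ?thesis .
qed

lemma Cut_eq_Sup_cut_partition:
  fixes \<Gamma> :: "'w graph"
  assumes "finite_graph \<Gamma>"
  shows "Cut \<Gamma> k = Sup {m. \<exists>R p lab. cut_partition \<Gamma> k R m p lab}"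
  unfolding Cut_def
proof (intro arg_cong[where f = Sup] set_eqI iffI; unfold mem_Collect_eq)
  fix m assume "\<exists>R (H :: nat \<Rightarrow> 'w pgraph). R \<subseteq> {1..k} \<times> {1..k} \<and>
    (\<forall>i<m. has_ports k (H i) \<and> verts (fst (H i)) \<noteq> {}) \<and> graph_iso \<Gamma> (Del (join R H m))"
  then show "\<exists>R p lab. cut_partition \<Gamma> k R m p lab"
    using cut_partition_if_iso_join by metis
next
  fix m assume "\<exists>R p lab. cut_partition \<Gamma> k R m p lab"
  then obtain R p lab where part: "cut_partition \<Gamma> k R m p lab" by blast
  then have "R \<subseteq> {1..k} \<times> {1..k}" by (simp add: cut_partition_def)
  then show "\<exists>R (H :: nat \<Rightarrow> 'w pgraph). R \<subseteq> {1..k} \<times> {1..k} \<and>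
    (\<forall>i<m. has_ports k (H i) \<and> verts (fst (H i)) \<noteq> {}) \<and> graph_iso \<Gamma> (Del (join R H m))"
    using iso_join_if_cut_partition[OF assms part] by blast
qed

lemma Cut_le:
  assumes "finite_graph \<Gamma>" and "\<And>R m p lab. cut_partition \<Gamma> k R m p lab \<Longrightarrow> m \<le> B"
  shows "Cut \<Gamma> k \<le> B"
proof -
  let ?M = "{m. \<exists>R p lab. cut_partition \<Gamma> k R m p lab}"
  have "Sup ?M \<le> B"
  proof (cases "?M = {}")
    case True
    then show ?thesis by (subst True) simp
  next
    case False
    then show ?thesis using assms(2) by (intro cSup_least) auto
  qed
  then show ?thesis unfolding Cut_eq_Sup_cut_partition[OF assms(1)] .
qed

lemma le_Cut:
  assumes "finite_graph \<Gamma>" and "cut_partition \<Gamma> k R m p lab"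
  shows "m \<le> Cut \<Gamma> k"
  unfolding Cut_eq_Sup_cut_partition[OF assms(1)]
proof (rule cSup_upper)
  show "m \<in> {m. \<exists>R p lab. cut_partition \<Gamma> k R m p lab}" using assms(2) by blast
  show "bdd_above {m. \<exists>R p lab. cut_partition \<Gamma> k R m p lab}"
    using cut_partition_le_card[OF assms(1)] by (intro bdd_aboveI[of _ "card (verts \<Gamma>)"]) blast
qed

lemma ex_two_witnesses:
  obtains Y where "Y \<subseteq> X" "finite Y" "card Y \<le> 2"
    "\<And>x j. x \<in> X \<Longrightarrow> q x \<noteq> j \<Longrightarrow> \<exists>y\<in>Y. q y \<noteq> j"
proof (cases "X = {}")
  case True
  show ?thesis by (rule that[of "{}"]) (simp_all add: True)
next
  case False
  then obtain x\<^sub>0 where x\<^sub>0: "x\<^sub>0 \<in> X" by blast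
  show ?thesis
  proof (cases "\<exists>x\<^sub>1\<in>X. q x\<^sub>1 \<noteq> q x\<^sub>0")
    case True
    then obtain x\<^sub>1 where x\<^sub>1: "x\<^sub>1 \<in> X" "q x\<^sub>1 \<noteq> q x\<^sub>0" by blast
    show ?thesis
    proof (rule that[of "{x\<^sub>0, x\<^sub>1}"])
      show "card {x\<^sub>0, x\<^sub>1} \<le> 2" by (simp add: card_insert_if)
      show "\<exists>y\<in>{x\<^sub>0, x\<^sub>1}. q y \<noteq> j" if "q x \<noteq> j" for x j
        using x\<^sub>1(2) by (cases "q x\<^sub>0 = j") auto
    qed (use x\<^sub>0 x\<^sub>1 in auto)
  next
    case False
    show ?thesis
    proof (rule that[of "{x\<^sub>0}"])
      show "\<exists>y\<in>{x\<^sub>0}. q y \<noteq> j" if "x \<in> X" "q x \<noteq> j" for x j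
        using False that by auto
    qed (use x\<^sub>0 in auto)
  qed
qed

locale IS_cut_partition =
  fixes G :: "'v graph" and k :: nat and R :: "(nat \<times> nat) set" and m :: nat
    and p lab :: "'v + 'v set \<Rightarrow> nat"
  assumes finite_graph: "finite_graph G"
    and partition: "cut_partition (IS G) k R m p lab"
begin

abbreviation linked :: "nat \<Rightarrow> nat \<Rightarrow> bool" where
  "linked a b \<equiv> (a, b) \<in> R \<or> (b, a) \<in> R"

lemma lab_range: "z \<in> verts (IS G) \<Longrightarrow> lab z \<in> {1..k}"
  using partition unfolding cut_partition_def by blast

lemma part_image: "p ` verts (IS G) = {..<m}"
  using partition unfolding cut_partition_def by (elim conjE)

lemma edge_IS_iff_linked:
  assumes "z \<in> verts (IS G)" "w \<in> verts (IS G)" "p z \<noteq> p w"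
  shows "{z, w} \<in> edges (IS G) \<longleftrightarrow> linked (lab z) (lab w)"
proof -
  have "\<forall>z\<in>verts (IS G). \<forall>w\<in>verts (IS G). p z \<noteq> p w \<longrightarrow>
          ({z, w} \<in> edges (IS G) \<longleftrightarrow> linked (lab z) (lab w))"
    using partition unfolding cut_partition_def by (elim conjE)
  then show ?thesis using assms by blast
qed

lemma incident_iff_linked:
  assumes "e \<in> edges G" "u \<in> verts G" "p (Inl u) \<noteq> p (Inr e)"
  shows "u \<in> e \<longleftrightarrow> linked (lab (Inl u)) (lab (Inr e))"
  using edge_IS_iff_linked[of "Inl u" "Inr e"] assms by (simp add: verts_IS Inl_Inr_in_edges_IS)

text \<open>Such parts are told apart by the port of any of their edge nodes: two such edge nodes with
  the same port are adjacent to the same vertex nodes, hence are the same edge.\<close>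

lemma card_parts_without_vertex_nodes:
  "card {i. i < m \<and> (\<forall>u\<in>verts G. p (Inl u) \<noteq> i)} \<le> k"
proof -
  define I where "I = {i. i < m \<and> (\<forall>u\<in>verts G. p (Inl u) \<noteq> i)}"
  have "\<exists>e. e \<in> edges G \<and> p (Inr e) = i" if "i \<in> I" for i
  proof -
    have "i \<in> p ` verts (IS G)" using that part_image unfolding I_def by auto
    then show ?thesis using that unfolding I_def verts_IS by auto
  qed
  then obtain ch where ch: "\<And>i. i \<in> I \<Longrightarrow> ch i \<in> edges G \<and> p (Inr (ch i)) = i" by metis
  have "inj_on (\<lambda>i. lab (Inr (ch i))) I"
  proof (rule inj_onI)
    fix i j assume i: "i \<in> I" and j: "j \<in> I" and same_port: "lab (Inr (ch i)) = lab (Inr (ch j))"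
    have "ch i \<subseteq> ch j"
    proof
      fix u assume u: "u \<in> ch i"
      then have uV: "u \<in> verts G" using ch[OF i] edge_subset_verts[OF finite_graph] by blast
      have "p (Inl u) \<noteq> i" "p (Inl u) \<noteq> j" using uV i j unfolding I_def by auto
      then have "linked (lab (Inl u)) (lab (Inr (ch j)))"
        using incident_iff_linked[of "ch i" u] u uV ch[OF i] same_port by simp
      then show "u \<in> ch j"
        using incident_iff_linked[of "ch j" u] uV ch[OF j] \<open>p (Inl u) \<noteq> j\<close> by simp
    qed
    moreover have "finite (ch j)" "card (ch i) = card (ch j)"
      using ch[OF i] ch[OF j] card_edge[OF finite_graph] by (simp_all add: card_ge_0_finite)
    ultimately have "ch i = ch j" by (simp add: card_subset_eq)
    then show "i = j" using ch[OF i] ch[OF j] by metis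
  qed
  moreover have "(\<lambda>i. lab (Inr (ch i))) ` I \<subseteq> {1..k}"
    using lab_range ch unfolding verts_IS by blast
  ultimately have "card I \<le> card {1..k}"
    by (intro card_inj_on_le) simp_all
  then show ?thesis unfolding I_def by simp
qed

text \<open>For each port \<open>c\<close> keep two edges of port \<open>c\<close> lying in different parts, if there are
  such. An endpoint \<open>u\<close> of an edge outside its part is linked to \<open>c\<close>, so it is an endpoint
  of every edge of port \<open>c\<close> outside its part, in particular of one of the two kept edges.\<close>

lemma ex_separator:
  obtains S where "S \<subseteq> verts G" "card S \<le> 4 * k"
    "\<And>e u. e \<in> edges G \<Longrightarrow> u \<in> e \<Longrightarrow> p (Inl u) \<noteq> p (Inr e) \<Longrightarrow> u \<in> S"
proof -
  define port_edges where "port_edges c = {e \<in> edges G. lab (Inr e) = c}" for c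
  have "\<exists>Y. Y \<subseteq> port_edges c \<and> finite Y \<and> card Y \<le> 2 \<and>
          (\<forall>e j. e \<in> port_edges c \<longrightarrow> p (Inr e) \<noteq> j \<longrightarrow> (\<exists>y\<in>Y. p (Inr y) \<noteq> j))" for c
  proof -
    obtain Y where "Y \<subseteq> port_edges c" "finite Y" "card Y \<le> 2"
      "\<And>e j. e \<in> port_edges c \<Longrightarrow> p (Inr e) \<noteq> j \<Longrightarrow> \<exists>y\<in>Y. p (Inr y) \<noteq> j"
      using ex_two_witnesses[of "port_edges c" "\<lambda>e. p (Inr e)"] by blast
    then show ?thesis by blast
  qed
  then obtain Y where Y_sub: "\<And>c. Y c \<subseteq> port_edges c" and card_Y: "\<And>c. card (Y c) \<le> 2"
    and Y_wit: "\<And>c e j. e \<in> port_edges c \<Longrightarrow> p (Inr e) \<noteq> j \<Longrightarrow> \<exists>y\<in>Y c. p (Inr y) \<noteq> j"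
    by metis
  define kept where "kept = (\<Union>c\<in>{1..k}. Y c)"
  have kept_edges: "kept \<subseteq> edges G" using Y_sub unfolding kept_def port_edges_def by blast
  show ?thesis
  proof (rule that[of "\<Union>kept"])
    show "\<Union>kept \<subseteq> verts G" using kept_edges edge_subset_verts[OF finite_graph] by blast
    have "card (\<Union>kept) \<le> (\<Sum>e\<in>kept. card e)" by (rule card_Union_le_sum_card)
    also have "\<dots> = (\<Sum>e\<in>kept. 2)"
      using kept_edges card_edge[OF finite_graph] by (intro sum.cong) auto
    also have "\<dots> = 2 * card kept" by simp
    also have "card kept \<le> (\<Sum>c\<in>{1..k}. card (Y c))" unfolding kept_def by (rule card_UN_le) simp
    also have "\<dots> \<le> (\<Sum>c\<in>{1..k}. 2)" using card_Y by (intro sum_mono)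
    finally show "card (\<Union>kept) \<le> 4 * k" by simp
  next
    fix e u assume e: "e \<in> edges G" and u: "u \<in> e" and apart: "p (Inl u) \<noteq> p (Inr e)"
    define c where "c = lab (Inr e)"
    have c: "c \<in> {1..k}" using lab_range[of "Inr e"] e unfolding c_def verts_IS by blast
    have "e \<in> port_edges c" using e by (simp add: port_edges_def c_def)
    then obtain y where y: "y \<in> Y c" "p (Inr y) \<noteq> p (Inl u)"
      using Y_wit apart by metis
    then have y_edge: "y \<in> edges G" "lab (Inr y) = c" using Y_sub[of c] by (auto simp: port_edges_def)
    have uV: "u \<in> verts G" using e u edge_subset_verts[OF finite_graph] by blast
    have "linked (lab (Inl u)) c" using incident_iff_linked[OF e uV apart] u by (simp add: c_def)
    then have "u \<in> y" using incident_iff_linked[OF y_edge(1) uV] y(2) y_edge(2) by simp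
    then show "u \<in> \<Union>kept" using y c unfolding kept_def by blast
  qed
qed

lemma num_parts_le: "m \<le> 5 * k + Sep G (4 * k)"
proof -
  obtain S where S: "S \<subseteq> verts G" "card S \<le> 4 * k"
    and sep: "\<And>e u. e \<in> edges G \<Longrightarrow> u \<in> e \<Longrightarrow> p (Inl u) \<noteq> p (Inr e) \<Longrightarrow> u \<in> S"
    using ex_separator by blast
  have finV: "finite (verts G)" using finite_graph by (simp add: finite_graph_def)
  define q where "q u = p (Inl u)" for u
  define edge_parts where "edge_parts = {i. i < m \<and> (\<forall>u\<in>verts G. p (Inl u) \<noteq> i)}"
  define outer_parts where "outer_parts = q ` (verts G - S)"
  define inner_parts where "inner_parts = q ` S"
  have "q x = q y" if "adj (del_verts G S) x y" for x y
  proof -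
    have e: "{x, y} \<in> edges G" "x \<notin> S" "y \<notin> S"
      using that by (auto simp: adj_def del_verts_def edges_def)
    have "q x = p (Inr {x, y})" using sep[OF e(1)] e(2) unfolding q_def by blast
    moreover have "q y = p (Inr {x, y})" using sep[OF e(1)] e(3) unfolding q_def by blast
    ultimately show ?thesis by simp
  qed
  then have "card outer_parts \<le> num_components (del_verts G S)"
    using card_image_le_num_components[of "del_verts G S" q] finV
    by (simp add: outer_parts_def del_verts_def verts_def)
  also have "\<dots> \<le> Sep G (4 * k)" using num_components_le_Sep[OF finite_graph S] .
  finally have card_outer: "card outer_parts \<le> Sep G (4 * k)" .
  have card_inner: "card inner_parts \<le> 4 * k"
    unfolding inner_parts_def
    using card_image_le[OF finite_subset[OF S(1) finV]] S(2) by (rule order_trans)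
  have card_edge_parts: "card edge_parts \<le> k"
    unfolding edge_parts_def by (rule card_parts_without_vertex_nodes)
  have "finite edge_parts" unfolding edge_parts_def by (rule finite_subset[of _ "{..<m}"]) auto
  moreover have "finite outer_parts" "finite inner_parts"
    using finV finite_subset[OF S(1) finV] by (simp_all add: outer_parts_def inner_parts_def)
  ultimately have finite_parts: "finite (edge_parts \<union> outer_parts \<union> inner_parts)" by blast
  have "{..<m} \<subseteq> edge_parts \<union> outer_parts \<union> inner_parts"
    unfolding edge_parts_def outer_parts_def inner_parts_def q_def by blast
  from card_mono[OF finite_parts this]
  have "m \<le> card (edge_parts \<union> outer_parts \<union> inner_parts)" by simp
  also have "\<dots> \<le> card edge_parts + card outer_parts + card inner_parts"
    by (meson add_right_mono card_Un_le order_trans)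
  finally show ?thesis using card_edge_parts card_outer card_inner by linarith
qed

end

lemma Cut_IS_le:
  assumes "finite_graph G"
  shows "Cut (IS G) k \<le> 5 * k + Sep G (4 * k)"
proof (rule Cut_le[OF finite_graph_IS[OF assms]])
  fix R m p lab assume "cut_partition (IS G) k R m p lab"
  then interpret IS_cut_partition G k R m p lab using assms by unfold_locales
  show "m \<le> 5 * k + Sep G (4 * k)" by (rule num_parts_le)
qed

locale IS_separator =
  fixes G :: "'v graph" and S :: "'v set" and k :: nat
    and idx :: "'v \<Rightarrow> nat" and num :: "'v set \<Rightarrow> nat"
  assumes finite_graph: "finite_graph G"
    and idx: "inj_on idx S" "idx ` S \<subseteq> {..<k}"
    and num: "bij_betw num (components (del_verts G S)) {..<num_components (del_verts G S)}"
begin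

abbreviation rest :: "'v graph" where "rest \<equiv> del_verts G S"

definition part :: "'v + 'v set \<Rightarrow> nat" where
  "part z = (case z of
       Inl u \<Rightarrow> if u \<in> S then 0 else num (component_of rest u)
     | Inr e \<Rightarrow> if e \<subseteq> S then 0 else num (component_of rest (SOME u. u \<in> e \<and> u \<notin> S)))"

definition port :: "'v + 'v set \<Rightarrow> nat" where
  "port z = (case z of
       Inl u \<Rightarrow> if u \<in> S then 3 + k + idx u else 1
     | Inr e \<Rightarrow> if e \<subseteq> S \<or> e \<inter> S = {} then 2 else 3 + idx (SOME s. s \<in> e \<inter> S))"

definition port_rel :: "(nat \<times> nat) set" where
  "port_rel = {(1, 1)} \<union> {(3 + k + i, 1) | i. i < k} \<union> {(3 + i, 3 + k + i) | i. i < k}"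

abbreviation linked :: "nat \<Rightarrow> nat \<Rightarrow> bool" where
  "linked a b \<equiv> (a, b) \<in> port_rel \<or> (b, a) \<in> port_rel"

lemma verts_rest: "verts rest = verts G - S"
  by (simp add: del_verts_def verts_def)

lemma component_in_components: "u \<in> verts G - S \<Longrightarrow> component_of rest u \<in> components rest"
  by (simp add: components_eq_image verts_rest)

lemma part_Inr_eq_part_Inl:
  assumes e: "e \<in> edges G" and u: "u \<in> e" "u \<notin> S"
  shows "part (Inr e) = part (Inl u)"
proof -
  define w where "w = (SOME u. u \<in> e \<and> u \<notin> S)"
  have w: "w \<in> e" "w \<notin> S" using someI[of "\<lambda>u. u \<in> e \<and> u \<notin> S" u] u unfolding w_def by auto
  have "component_of rest w = component_of rest u"
  proof (cases "w = u")
    case False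
    obtain a b where "e = {a, b}" using card_edge[OF finite_graph e] card_2_iff by metis
    then have "e = {w, u}" using w u False by auto
    then have "adj rest w u" using e w u by (auto simp: adj_def del_verts_def edges_def)
    then show ?thesis by (rule component_of_eq_if_adj)
  qed simp
  then show ?thesis using u unfolding part_def w_def by auto
qed

lemma port_Inl: "port (Inl u) = (if u \<in> S then 3 + k + idx u else 1)"
  by (simp add: port_def)

lemma idx_less: "s \<in> S \<Longrightarrow> idx s < k"
  using idx(2) by blast

lemma port_Inr_range: "2 \<le> port (Inr e) \<and> port (Inr e) < 3 + k"
proof (cases "e \<subseteq> S \<or> e \<inter> S = {}")
  case False
  then have "(SOME s. s \<in> e \<inter> S) \<in> S" by (metis Int_iff ex_in_conv someI_ex)
  then show ?thesis using False idx_less by (simp add: port_def)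
qed (simp add: port_def)

lemma linked_Inl_Inl:
  assumes "part (Inl a) \<noteq> part (Inl b)"
  shows "linked (port (Inl a)) (port (Inl b))"
proof -
  have "a \<notin> S \<or> b \<notin> S" using assms by (auto simp: part_def)
  then show ?thesis using idx_less by (auto simp: port_Inl port_rel_def)
qed

lemma not_linked_Inr_Inr: "\<not> linked (port (Inr e)) (port (Inr e'))"
  using port_Inr_range[of e] port_Inr_range[of e'] by (auto simp: port_rel_def)

lemma incident_iff_linked:
  assumes a: "a \<in> verts G" and e: "e \<in> edges G" and apart: "part (Inl a) \<noteq> part (Inr e)"
  shows "a \<in> e \<longleftrightarrow> linked (port (Inl a)) (port (Inr e))"
proof
  assume ae: "a \<in> e"
  then have aS: "a \<in> S" using part_Inr_eq_part_Inl[OF e] apart by metis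
  then have "\<not> e \<subseteq> S" using apart by (auto simp: part_def)
  obtain x y where "e = {x, y}" using card_edge[OF finite_graph e] card_2_iff by metis
  then obtain b where e_ab: "e = {a, b}" using ae by blast
  then have "b \<notin> S" using aS \<open>\<not> e \<subseteq> S\<close> by blast
  then have "e \<inter> S = {a}" "\<not> (e \<subseteq> S \<or> e \<inter> S = {})" using aS e_ab by auto
  then have "port (Inr e) = 3 + idx a" by (simp add: port_def)
  then show "linked (port (Inl a)) (port (Inr e))"
    using aS idx_less by (auto simp: port_Inl port_rel_def)
next
  assume "linked (port (Inl a)) (port (Inr e))"
  then obtain i where i: "i < k" "port (Inr e) = 3 + i" "port (Inl a) = 3 + k + i"
    using port_Inr_range[of e] by (auto simp: port_rel_def port_Inl split: if_splits)
  then have aS: "a \<in> S" and "idx a = i" by (auto simp: port_Inl split: if_splits)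
  have mixed: "\<not> (e \<subseteq> S \<or> e \<inter> S = {})" using i by (auto simp: port_def)
  define s where "s = (SOME s. s \<in> e \<inter> S)"
  have s: "s \<in> e" "s \<in> S" using mixed someI_ex[of "\<lambda>s. s \<in> e \<inter> S"] unfolding s_def by auto
  have "idx s = idx a" using mixed i \<open>idx a = i\<close> by (simp add: port_def s_def)
  then show "a \<in> e" using idx(1) s aS by (metis inj_onD)
qed

lemma part_image:
  assumes "0 < num_components rest"
  shows "part ` verts (IS G) = {..<num_components rest}"
proof
  have num_less: "num (component_of rest u) < num_components rest" if "u \<in> verts G - S" for u
    using bij_betwE[OF num] component_in_components[OF that] by blast
  show "part ` verts (IS G) \<subseteq> {..<num_components rest}"
  proof
    fix i assume "i \<in> part ` verts (IS G)"
    then obtain z where z: "z \<in> verts (IS G)" "i = part z" by blast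
    show "i \<in> {..<num_components rest}"
    proof (cases z)
      case (Inl u)
      then show ?thesis using z num_less assms by (auto simp: part_def verts_IS)
    next
      case (Inr e)
      then have e: "e \<in> edges G" using z by (auto simp: verts_IS)
      show ?thesis
      proof (cases "e \<subseteq> S")
        case True
        then show ?thesis using Inr z assms by (simp add: part_def)
      next
        case False
        then obtain u where u: "u \<in> e" "u \<notin> S" by blast
        then have "u \<in> verts G - S" using edge_subset_verts[OF finite_graph e] by blast
        then show ?thesis
          using z Inr part_Inr_eq_part_Inl[OF e u] num_less by (simp add: part_def)
      qed
    qed
  qed
  show "{..<num_components rest} \<subseteq> part ` verts (IS G)"
  proof
    fix i assume "i \<in> {..<num_components rest}"
    then obtain X where X: "X \<in> components rest" "num X = i"
      using bij_betw_imp_surj_on[OF num] by (metis imageE)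
    then obtain u where u: "u \<in> verts G - S" "X = component_of rest u"
      by (auto simp: components_eq_image verts_rest)
    then have "part (Inl u) = i" using X by (simp add: part_def)
    then show "i \<in> part ` verts (IS G)" using u(1) by (force simp: verts_IS)
  qed
qed

lemma port_range: "port z \<in> {1..2 * k + 2}"
proof (cases z)
  case (Inl u)
  then show ?thesis using idx_less[of u] by (auto simp: port_Inl)
next
  case (Inr e)
  then show ?thesis using port_Inr_range[of e] by simp
qed

lemma cut_partition_IS:
  assumes "0 < num_components rest"
  shows "cut_partition (IS G) (2 * k + 2) port_rel (num_components rest) part port"
  unfolding cut_partition_def
proof (intro conjI ballI impI)
  show "port_rel \<subseteq> {1..2 * k + 2} \<times> {1..2 * k + 2}" by (auto simp: port_rel_def)
  show "part ` verts (IS G) = {..<num_components rest}" using assms by (rule part_image)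
  show "port ` verts (IS G) \<subseteq> {1..2 * k + 2}" using port_range by blast
  fix z w assume z: "z \<in> verts (IS G)" and w: "w \<in> verts (IS G)" and apart: "part z \<noteq> part w"
  show "{z, w} \<in> edges (IS G) \<longleftrightarrow> linked (port z) (port w)"
  proof (cases z; cases w)
    fix a b assume "z = Inl a" "w = Inl b"
    then show ?thesis
      using z w apart linked_Inl_Inl by (auto simp: verts_IS Inl_Inl_in_edges_IS)
  next
    fix a e assume "z = Inl a" "w = Inr e"
    then show ?thesis
      using z w apart incident_iff_linked by (auto simp: verts_IS Inl_Inr_in_edges_IS)
  next
    fix e a assume "z = Inr e" "w = Inl a"
    then show ?thesis
      using z w apart incident_iff_linked[of a e] by (auto simp: verts_IS Inr_Inl_in_edges_IS)
  next
    fix e e' assume "z = Inr e" "w = Inr e'"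
    then show ?thesis using not_linked_Inr_Inr Inr_Inr_notin_edges_IS by simp
  qed
qed

end

lemma Sep_le_Cut_IS:
  assumes "finite_graph G"
  shows "Sep G k \<le> Cut (IS G) (2 * k + 2)"
proof -
  obtain S where S: "S \<subseteq> verts G" "card S \<le> k" and Sep: "Sep G k = num_components (del_verts G S)"
    using Sep_attained[OF assms] by blast
  show ?thesis
  proof (cases "num_components (del_verts G S) = 0")
    case False
    have "finite S" using S(1) assms finite_subset by (auto simp: finite_graph_def)
    then obtain idx where idx: "bij_betw idx S {0..<card S}" using ex_bij_betw_finite_nat by blast
    have "finite (components (del_verts G S))"
      using assms by (intro finite_components) (simp add: finite_graph_def del_verts_def verts_def)
    then obtain num where num:
      "bij_betw num (components (del_verts G S)) {..<num_components (del_verts G S)}"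
      using ex_bij_betw_finite_nat unfolding num_components_def atLeast0LessThan by blast
    interpret IS_separator G S k idx num
      using assms idx S(2) num by unfold_locales (auto simp: bij_betw_def)
    show ?thesis
      using le_Cut[OF finite_graph_IS[OF assms] cut_partition_IS] False Sep by simp
  qed (simp add: Sep)
qed

theorem SEP_iff_CUT_IS:
  assumes "\<forall>G\<in>C. finite_graph G"
  shows "SEP C \<longleftrightarrow> CUT (IS ` C)"
proof
  assume "SEP C"
  then obtain f where f: "\<And>G k. G \<in> C \<Longrightarrow> Sep G k \<le> f k" unfolding SEP_def by blast
  have "Cut (IS G) k \<le> 5 * k + f (4 * k)" if "G \<in> C" for G k
    using Cut_IS_le[of G k] f[OF that, of "4 * k"] assms that by simp
  then show "CUT (IS ` C)"
    unfolding CUT_def by (intro exI[of _ "\<lambda>k. 5 * k + f (4 * k)"]) blast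
next
  assume "CUT (IS ` C)"
  then obtain f where f: "\<And>G k. G \<in> C \<Longrightarrow> Cut (IS G) k \<le> f k" unfolding CUT_def by blast
  have "Sep G k \<le> f (2 * k + 2)" if "G \<in> C" for G k
    using Sep_le_Cut_IS[of G k] f[OF that, of "2 * k + 2"] assms that by simp
  then show "SEP C"
    unfolding SEP_def by (intro exI[of _ "\<lambda>k. f (2 * k + 2)"]) blast
qed

theorem proposition6p3:
  fixes C :: "'v graph set"
  assumes "\<forall>G\<in>C. finite_graph G"
  shows "(MSO2_orderable C \<longleftrightarrow> MSO1_orderable (IS ` C)) \<and>
         (SEP C \<longleftrightarrow> CUT (IS ` C))"
  using MSO2_orderable_iff_MSO1_orderable_IS[OF assms] SEP_iff_CUT_IS[OF assms] by blast

end
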